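(* Let $X$ be a $P$-space with $X=\bigcup_{\alpha\in\Lambda}X_\alpha$, where each $X_\alpha$ is a closed locally Menger subspace of $X$ and the family $\{X_\alpha:\alpha\in\Lambda\}$ is locally countable in $X$ (every point has a neighbourhood meeting only countably many $X_\alpha$). Then $X$ is locally Menger.
   Context: A $P$-space is a space in which every countable intersection of open sets is open. A space $X$ is Menger if for each sequence $(\mathcal{U}_n)$ of open covers of $X$ there is a sequence $(\mathcal{V}_n)$ with each $\mathcal{V}_n$ a finite subset of $\mathcal{U}_n$ and $\bigcup_{n}\bigcup\mathcal{V}_n=X$. A space $X$ is locally Menger if for each $x\in X$ there exist an open set $U$ and a Menger subspace $Y$ of $X$ with $x\in U\subseteq Y$. *)

theory Defs
  imports "HOL-Analysis.Analysis"
begin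

text \<open>A P-space: every countable intersection of open sets is open.
  Countable (nonempty) families are represented as sequences (finite families by repetition).\<close>
definition P_space :: "'a topology \<Rightarrow> bool" where
  "P_space X \<longleftrightarrow> (\<forall>U :: nat \<Rightarrow> 'a set. (\<forall>n. openin X (U n)) \<longrightarrow> openin X (\<Inter>n. U n))"

definition Menger_space :: "'a topology \<Rightarrow> bool" where
  "Menger_space X \<longleftrightarrow>
     (\<forall>\<U> :: nat \<Rightarrow> 'a set set.
        (\<forall>n. (\<forall>V\<in>\<U> n. openin X V) \<and> topspace X \<subseteq> \<Union>(\<U> n)) \<longrightarrow>
        (\<exists>\<V> :: nat \<Rightarrow> 'a set set. (\<forall>n. finite (\<V> n) \<and> \<V> n \<subseteq> \<U> n) \<and>
            topspace X \<subseteq> (\<Union>n. \<Union>(\<V> n))))"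

definition locally_Menger :: "'a topology \<Rightarrow> bool" where
  "locally_Menger X \<longleftrightarrow>
     (\<forall>x\<in>topspace X. \<exists>U Y. openin X U \<and> Y \<subseteq> topspace X \<and>
         Menger_space (subtopology X Y) \<and> x \<in> U \<and> U \<subseteq> Y)"

end

theory Submission
  imports Defs
begin

text \<open>Fix a point x and an open neighbourhood N of x meeting only countably many of the
  closed sets XX \<alpha>. For each of these, local Mengerness gives an open G \<alpha> containing x such
  that G \<alpha> \<inter> XX \<alpha> lies in a Menger subspace Y \<alpha> (if x \<notin> XX \<alpha>, take the open
  complement of XX \<alpha> and Y \<alpha> = {}). Since X is a P-space, N \<inter> (\<Inter>\<alpha>. G \<alpha>) is an open
  neighbourhood of x, and it is contained in the countable union of the Y \<alpha>, which is Menger.\<close>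

lemma Menger_space_empty:
  assumes "topspace X = {}"
  shows "Menger_space X"
  unfolding Menger_space_def using assms by (intro allI impI exI[of _ "\<lambda>n. {}"]) auto

lemma P_space_openin_Inter:
  assumes "P_space X" "countable \<U>" "\<U> \<noteq> {}" "\<And>U. U \<in> \<U> \<Longrightarrow> openin X U"
  shows "openin X (\<Inter>\<U>)"
proof -
  have "\<Inter>\<U> = (\<Inter>n. from_nat_into \<U> n)"
    using range_from_nat_into[OF assms(3,2)] by simp
  then show ?thesis
    using assms from_nat_into[OF assms(3)] unfolding P_space_def by metis
qed

lemma Menger_space_subtopology_iff:
  assumes "Y \<subseteq> topspace X"
  shows "Menger_space (subtopology X Y) \<longleftrightarrow>
    (\<forall>\<U> :: nat \<Rightarrow> 'a set set. (\<forall>n. (\<forall>V\<in>\<U> n. openin X V) \<and> Y \<subseteq> \<Union>(\<U> n)) \<longrightarrow>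
       (\<exists>\<V>. (\<forall>n. finite (\<V> n) \<and> \<V> n \<subseteq> \<U> n) \<and> Y \<subseteq> (\<Union>n. \<Union>(\<V> n))))"
    (is "_ \<longleftrightarrow> ?ambient")
proof
  assume men: "Menger_space (subtopology X Y)"
  show ?ambient
  proof (intro allI impI)
    fix \<U> :: "nat \<Rightarrow> 'a set set"
    assume \<U>: "\<forall>n. (\<forall>V\<in>\<U> n. openin X V) \<and> Y \<subseteq> \<Union>(\<U> n)"
    define \<T> where "\<T> n = (\<lambda>V. V \<inter> Y) ` \<U> n" for n
    have "openin (subtopology X Y) V" if "V \<in> \<T> n" for V n
      using that \<U> unfolding \<T>_def by (auto intro: openin_subtopology_Int)
    moreover have "topspace (subtopology X Y) \<subseteq> \<Union>(\<T> n)" for n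
      using \<U> unfolding \<T>_def by auto
    ultimately have "\<forall>n. (\<forall>V\<in>\<T> n. openin (subtopology X Y) V) \<and> topspace (subtopology X Y) \<subseteq> \<Union>(\<T> n)"
      by blast
    from men[unfolded Menger_space_def, THEN spec[of _ \<T>], THEN mp, OF this]
    obtain \<V> where \<V>: "\<forall>n. finite (\<V> n) \<and> \<V> n \<subseteq> \<T> n"
      and cov: "topspace (subtopology X Y) \<subseteq> (\<Union>n. \<Union>(\<V> n))"
      by blast
    have "\<exists>\<F>\<subseteq>\<U> n. finite \<F> \<and> \<V> n = (\<lambda>V. V \<inter> Y) ` \<F>" for n
      using finite_subset_image[of "\<V> n" "\<lambda>V. V \<inter> Y" "\<U> n"] \<V> unfolding \<T>_def by blast
    then obtain \<F> where \<F>: "\<And>n. \<F> n \<subseteq> \<U> n \<and> finite (\<F> n) \<and> \<V> n = (\<lambda>V. V \<inter> Y) ` \<F> n"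
      using choice[of "\<lambda>n \<F>. \<F> \<subseteq> \<U> n \<and> finite \<F> \<and> \<V> n = (\<lambda>V. V \<inter> Y) ` \<F>"] by blast
    have "Y \<subseteq> (\<Union>n. \<Union>(\<F> n))"
    proof
      fix y assume "y \<in> Y"
      then obtain n V where "V \<in> \<V> n" "y \<in> V"
        using cov assms by auto
      then show "y \<in> (\<Union>n. \<Union>(\<F> n))"
        using \<F>[of n] by auto
    qed
    then show "\<exists>\<V>. (\<forall>n. finite (\<V> n) \<and> \<V> n \<subseteq> \<U> n) \<and> Y \<subseteq> (\<Union>n. \<Union>(\<V> n))"
      using \<F> by (intro exI[of _ \<F>]) blast
  qed
next
  assume ambient: ?ambient
  show "Menger_space (subtopology X Y)"
    unfolding Menger_space_def
  proof (intro allI impI)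
    fix \<U> :: "nat \<Rightarrow> 'a set set"
    assume \<U>: "\<forall>n. (\<forall>V\<in>\<U> n. openin (subtopology X Y) V) \<and> topspace (subtopology X Y) \<subseteq> \<Union>(\<U> n)"
    define \<T> where "\<T> n = {T. openin X T \<and> T \<inter> Y \<in> \<U> n}" for n
    have "Y \<subseteq> \<Union>(\<T> n)" for n
    proof
      fix y assume "y \<in> Y"
      then have "y \<in> topspace (subtopology X Y)"
        using assms by auto
      then obtain V where "V \<in> \<U> n" "y \<in> V"
        using \<U> by blast
      moreover have "openin (subtopology X Y) V"
        using \<U> \<open>V \<in> \<U> n\<close> by blast
      then obtain T where "openin X T" "V = T \<inter> Y"
        unfolding openin_subtopology by blast
      ultimately show "y \<in> \<Union>(\<T> n)"
        unfolding \<T>_def by auto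
    qed
    then have "\<forall>n. (\<forall>T\<in>\<T> n. openin X T) \<and> Y \<subseteq> \<Union>(\<T> n)"
      unfolding \<T>_def by blast
    from ambient[THEN spec[of _ \<T>], THEN mp, OF this]
    obtain \<F> where \<F>: "\<forall>n. finite (\<F> n) \<and> \<F> n \<subseteq> \<T> n" and cov: "Y \<subseteq> (\<Union>n. \<Union>(\<F> n))"
      by blast
    show "\<exists>\<V>. (\<forall>n. finite (\<V> n) \<and> \<V> n \<subseteq> \<U> n) \<and> topspace (subtopology X Y) \<subseteq> (\<Union>n. \<Union>(\<V> n))"
    proof (intro exI[of _ "\<lambda>n. (\<lambda>T. T \<inter> Y) ` \<F> n"] conjI allI)
      fix n
      show "finite ((\<lambda>T. T \<inter> Y) ` \<F> n)" "(\<lambda>T. T \<inter> Y) ` \<F> n \<subseteq> \<U> n"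
        using \<F> unfolding \<T>_def by auto
    next
      show "topspace (subtopology X Y) \<subseteq> (\<Union>n. \<Union>((\<lambda>T. T \<inter> Y) ` \<F> n))"
        using cov by auto
    qed
  qed
qed

lemma Menger_space_subtopology_UN_nat:
  fixes Y :: "nat \<Rightarrow> 'a set"
  assumes "\<And>k. Y k \<subseteq> topspace X" "\<And>k. Menger_space (subtopology X (Y k))"
  shows "Menger_space (subtopology X (\<Union>k. Y k))"
proof -
  note Menger_Y = Menger_space_subtopology_iff[OF assms(1), THEN iffD1, OF assms(2)]
  have Union_sub: "(\<Union>k. Y k) \<subseteq> topspace X"
    using assms(1) by blast
  show ?thesis
    unfolding Menger_space_subtopology_iff[OF Union_sub]
  proof (intro allI impI)
    fix \<U> :: "nat \<Rightarrow> 'a set set"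
    assume \<U>: "\<forall>n. (\<forall>V\<in>\<U> n. openin X V) \<and> (\<Union>k. Y k) \<subseteq> \<Union>(\<U> n)"
    have "\<exists>\<F>. (\<forall>m. finite (\<F> m) \<and> \<F> m \<subseteq> \<U> (prod_encode (k, m))) \<and> Y k \<subseteq> (\<Union>m. \<Union>(\<F> m))" for k
    proof (rule Menger_Y[THEN spec, THEN mp])
      show "\<forall>m. (\<forall>V\<in>\<U> (prod_encode (k, m)). openin X V) \<and> Y k \<subseteq> \<Union>(\<U> (prod_encode (k, m)))"
        using \<U> by blast
    qed
    then have "\<exists>\<F>. \<forall>k. (\<forall>m. finite (\<F> k m) \<and> \<F> k m \<subseteq> \<U> (prod_encode (k, m))) \<and> Y k \<subseteq> (\<Union>m. \<Union>(\<F> k m))"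
      by (rule choice[OF allI])
    then obtain \<F> where \<F>: "\<And>k m. finite (\<F> k m) \<and> \<F> k m \<subseteq> \<U> (prod_encode (k, m))"
      and cov: "\<And>k. Y k \<subseteq> (\<Union>m. \<Union>(\<F> k m))"
      by blast
    \<comment> \<open>the cover with index prod_encode (k, m) is the m-th cover used for Y k\<close>
    define \<V> where "\<V> n = case_prod \<F> (prod_decode n)" for n
    have \<V>_encode: "\<V> (prod_encode (k, m)) = \<F> k m" for k m
      unfolding \<V>_def by simp
    show "\<exists>\<V>. (\<forall>n. finite (\<V> n) \<and> \<V> n \<subseteq> \<U> n) \<and> (\<Union>k. Y k) \<subseteq> (\<Union>n. \<Union>(\<V> n))"
    proof (intro exI[of _ \<V>] conjI allI)
      fix n
      obtain k m where n: "n = prod_encode (k, m)"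
        by (metis prod_decode_inverse prod.collapse)
      show "finite (\<V> n)" "\<V> n \<subseteq> \<U> n"
        using \<F>[of k m] by (simp_all add: n \<V>_encode)
    next
      show "(\<Union>k. Y k) \<subseteq> (\<Union>n. \<Union>(\<V> n))"
      proof
        fix y assume "y \<in> (\<Union>k. Y k)"
        then obtain k m where "y \<in> \<Union>(\<F> k m)"
          using cov by blast
        then show "y \<in> (\<Union>n. \<Union>(\<V> n))"
          using \<V>_encode[of k m] by blast
      qed
    qed
  qed
qed

lemma Menger_space_subtopology_UN:
  assumes "countable I" "\<And>i. i \<in> I \<Longrightarrow> Y i \<subseteq> topspace X"
    "\<And>i. i \<in> I \<Longrightarrow> Menger_space (subtopology X (Y i))"
  shows "Menger_space (subtopology X (\<Union>i\<in>I. Y i))"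
proof (cases "I = {}")
  case True
  then show ?thesis
    by (simp add: Menger_space_empty)
next
  case False
  have "Menger_space (subtopology X (\<Union>k. Y (from_nat_into I k)))"
    by (rule Menger_space_subtopology_UN_nat) (simp_all add: assms from_nat_into[OF False])
  moreover have "(\<Union>k. Y (from_nat_into I k)) = (\<Union>i\<in>I. Y i)"
    by (metis range_from_nat_into[OF False assms(1)] image_image)
  ultimately show ?thesis
    by simp
qed

lemma closedin_locally_Menger_near_point:
  assumes "closedin X A" "locally_Menger (subtopology X A)" "x \<in> topspace X"
  obtains G Y where "openin X G" "x \<in> G" "Y \<subseteq> topspace X" "Menger_space (subtopology X Y)"
    "G \<inter> A \<subseteq> Y"
proof (cases "x \<in> A")
  case True
  with assms(3) have "x \<in> topspace (subtopology X A)"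
    by simp
  then obtain U Y where UY: "openin (subtopology X A) U" "Y \<subseteq> topspace (subtopology X A)"
      "Menger_space (subtopology (subtopology X A) Y)" "x \<in> U" "U \<subseteq> Y"
    using assms(2) unfolding locally_Menger_def by blast
  from UY(1) obtain G where "openin X G" "U = G \<inter> A"
    by (auto simp: openin_subtopology)
  moreover have "subtopology (subtopology X A) Y = subtopology X Y"
    using UY(2) by (simp add: subtopology_subtopology Int_absorb1)
  ultimately show ?thesis
    using that UY by auto
next
  case False
  have "openin X (topspace X - A)"
    using assms(1) by (simp add: closedin_def)
  then show ?thesis
    using that[of "topspace X - A" "{}"] False assms(3) by (auto simp: Menger_space_empty)
qed

lemma P_space_Menger_neighbourhood:
  assumes "P_space X" "countable C" "openin X N" "x \<in> N" "N \<subseteq> (\<Union>\<alpha>\<in>C. A \<alpha>)"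
    and G: "\<And>\<alpha>. \<alpha> \<in> C \<Longrightarrow> openin X (G \<alpha>) \<and> x \<in> G \<alpha> \<and> G \<alpha> \<inter> A \<alpha> \<subseteq> Y \<alpha>"
    and Y: "\<And>\<alpha>. \<alpha> \<in> C \<Longrightarrow> Y \<alpha> \<subseteq> topspace X \<and> Menger_space (subtopology X (Y \<alpha>))"
  shows "\<exists>U Z. openin X U \<and> Z \<subseteq> topspace X \<and> Menger_space (subtopology X Z) \<and> x \<in> U \<and> U \<subseteq> Z"
proof (intro exI conjI)
  show "openin X (\<Inter>(insert N (G ` C)))"
    using assms(3) G by (intro P_space_openin_Inter[OF assms(1)]) (auto simp: assms(2))
  show "x \<in> \<Inter>(insert N (G ` C))"
    using assms(4) G by simp
  show "\<Inter>(insert N (G ` C)) \<subseteq> (\<Union>\<alpha>\<in>C. Y \<alpha>)"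
  proof
    fix y assume y: "y \<in> \<Inter>(insert N (G ` C))"
    then obtain \<beta> where "\<beta> \<in> C" "y \<in> A \<beta>"
      using assms(5) by auto
    with y G show "y \<in> (\<Union>\<alpha>\<in>C. Y \<alpha>)"
      by blast
  qed
  show "(\<Union>\<alpha>\<in>C. Y \<alpha>) \<subseteq> topspace X"
    using Y by blast
  show "Menger_space (subtopology X (\<Union>\<alpha>\<in>C. Y \<alpha>))"
    using assms(2) Y by (intro Menger_space_subtopology_UN) auto
qed

theorem theorem4p6:
  fixes X :: "'a topology" and \<Lambda> :: "'i set" and XX :: "'i \<Rightarrow> 'a set"
  assumes "P_space X"
    and "topspace X = (\<Union>\<alpha>\<in>\<Lambda>. XX \<alpha>)"
    and "\<forall>\<alpha>\<in>\<Lambda>. closedin X (XX \<alpha>) \<and> locally_Menger (subtopology X (XX \<alpha>))"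
    and "\<forall>x\<in>topspace X. \<exists>N. openin X N \<and> x \<in> N \<and> countable {\<alpha>\<in>\<Lambda>. XX \<alpha> \<inter> N \<noteq> {}}"
  shows "locally_Menger X"
  unfolding locally_Menger_def
proof
  fix x assume x: "x \<in> topspace X"
  then obtain N where N: "openin X N" "x \<in> N" "countable {\<alpha>\<in>\<Lambda>. XX \<alpha> \<inter> N \<noteq> {}}"
    using assms(4) by blast
  define C where "C = {\<alpha>\<in>\<Lambda>. XX \<alpha> \<inter> N \<noteq> {}}"
  have cover: "N \<subseteq> (\<Union>\<alpha>\<in>C. XX \<alpha>)"
    using assms(2) openin_subset[OF N(1)] unfolding C_def by blast
  have "\<exists>G Y. openin X G \<and> x \<in> G \<and> G \<inter> XX \<alpha> \<subseteq> Y \<and>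
      Y \<subseteq> topspace X \<and> Menger_space (subtopology X Y)" if "\<alpha> \<in> C" for \<alpha>
  proof -
    have "closedin X (XX \<alpha>)" "locally_Menger (subtopology X (XX \<alpha>))"
      using that assms(3) unfolding C_def by blast+
    then show ?thesis
      using closedin_locally_Menger_near_point x by metis
  qed
  then obtain G Y where G: "\<And>\<alpha>. \<alpha> \<in> C \<Longrightarrow> openin X (G \<alpha>) \<and> x \<in> G \<alpha> \<and> G \<alpha> \<inter> XX \<alpha> \<subseteq> Y \<alpha>"
    and Y: "\<And>\<alpha>. \<alpha> \<in> C \<Longrightarrow> Y \<alpha> \<subseteq> topspace X \<and> Menger_space (subtopology X (Y \<alpha>))"
    by metis
  show "\<exists>U Y. openin X U \<and> Y \<subseteq> topspace X \<and> Menger_space (subtopology X Y) \<and> x \<in> U \<and> U \<subseteq> Y"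
    using P_space_Menger_neighbourhood[OF assms(1) N(3)[folded C_def] N(1,2) cover G Y] .
qed

end
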